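(* Let $K_1\subseteq K_2$ be fields, $n$ a positive integer, and $R=K_1+X^nK_2[[X]]$, i.e. the ring of formal power series $\sum_{i\ge0} a_iX^i$ with $a_0\in K_1$, $a_1=\dots=a_{n-1}=0$ and $a_i\in K_2$ for $i\ge n$. Then: (a) $R$ has absolutely irreducible elements if and only if $K_1=K_2$ and $n=1$; (b) $R$ has prime elements if and only if $K_1=K_2$ and $n=1$.
   Context: For an integral domain $R$, factorization notions refer to the monoid $(R\setminus\{0\},\cdot)$. An element is irreducible if it is a non-unit that is not a product of two non-units. Two factorizations into irreducibles $a_1\cdots a_n=b_1\cdots b_m$ of the same element are essentially the same if $n=m$ and, after re-indexing, $a_j$ and $b_j$ are associated for all $j$. An irreducible $r$ is absolutely irreducible if for every $n\in\mathbb N$, every factorization of $r^n$ into irreducibles is essentially the same as $r^n=r\cdots r$. *)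

theory Defs
  imports "HOL-Computational_Algebra.Formal_Power_Series"
begin

text \<open>K2 is the ambient field type 'a; K1 is a subfield given as a subset of 'a.\<close>

definition is_subfield :: "'a::field set \<Rightarrow> bool" where
  "is_subfield K \<longleftrightarrow> 0 \<in> K \<and> 1 \<in> K \<and>
     (\<forall>x\<in>K. \<forall>y\<in>K. x + y \<in> K \<and> x * y \<in> K) \<and>
     (\<forall>x\<in>K. - x \<in> K) \<and> (\<forall>x\<in>K. x \<noteq> 0 \<longrightarrow> inverse x \<in> K)"

definition R_ring :: "'a::field set \<Rightarrow> nat \<Rightarrow> 'a fps set" where
  "R_ring K1 n = {f. fps_nth f 0 \<in> K1 \<and> (\<forall>i. 0 < i \<and> i < n \<longrightarrow> fps_nth f i = 0)}"

definition unit_in :: "'b::comm_ring_1 set \<Rightarrow> 'b \<Rightarrow> bool" where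
  "unit_in S u \<longleftrightarrow> u \<in> S \<and> (\<exists>v\<in>S. u * v = 1)"

definition dvd_in :: "'b::comm_ring_1 set \<Rightarrow> 'b \<Rightarrow> 'b \<Rightarrow> bool" where
  "dvd_in S a b \<longleftrightarrow> (\<exists>c\<in>S. b = a * c)"

definition assoc_in :: "'b::comm_ring_1 set \<Rightarrow> 'b \<Rightarrow> 'b \<Rightarrow> bool" where
  "assoc_in S a b \<longleftrightarrow> (\<exists>u. unit_in S u \<and> b = u * a)"

definition irred_in :: "'b::comm_ring_1 set \<Rightarrow> 'b \<Rightarrow> bool" where
  "irred_in S r \<longleftrightarrow> r \<in> S \<and> r \<noteq> 0 \<and> \<not> unit_in S r \<and>
     (\<forall>a\<in>S. \<forall>b\<in>S. r = a * b \<longrightarrow> unit_in S a \<or> unit_in S b)"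

definition abs_irred_in :: "'b::comm_ring_1 set \<Rightarrow> 'b \<Rightarrow> bool" where
  "abs_irred_in S r \<longleftrightarrow> irred_in S r \<and>
     (\<forall>k::nat. \<forall>xs. (\<forall>x\<in>set xs. irred_in S x) \<and> prod_list xs = r ^ k \<longrightarrow>
        length xs = k \<and> (\<forall>x\<in>set xs. assoc_in S r x))"

definition prime_in :: "'b::comm_ring_1 set \<Rightarrow> 'b \<Rightarrow> bool" where
  "prime_in S p \<longleftrightarrow> p \<in> S \<and> p \<noteq> 0 \<and> \<not> unit_in S p \<and>
     (\<forall>a\<in>S. \<forall>b\<in>S. dvd_in S p (a * b) \<longrightarrow> dvd_in S p a \<or> dvd_in S p b)"

end

theory Submission
  imports Defs
begin

text \<open>The units of \<open>R = K\<^sub>1 + X\<^sup>n K\<^sub>2[[X]]\<close> are its elements with nonzero constant term, so the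
  nonunits form an ideal that is even closed under multiplication by all of \<open>K\<^sub>2[[X]]\<close>.
  If \<open>R \<noteq> K\<^sub>2[[X]]\<close>, pick a unit \<open>g\<close> of \<open>K\<^sub>2[[X]]\<close> outside \<open>R\<close>. A prime \<open>p\<close> would divide
  \<open>(pg)\<^sup>2 = p \<cdot> pg\<^sup>2\<close>, hence \<open>pg\<close>, forcing \<open>g \<in> R\<close>; an absolutely irreducible \<open>r\<close> would have
  \<open>r\<^sup>2 = (rg)(rg\<^sup>-\<^sup>1)\<close> with both factors irreducible, so \<open>rg\<close> would be associated to \<open>r\<close>,
  again forcing \<open>g \<in> R\<close>. Conversely, in \<open>K\<^sub>2[[X]]\<close> the irreducibles are the series of
  order 1, i.e. the associates of \<open>X\<close>, and \<open>X\<close> is prime and absolutely irreducible.\<close>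

unbundle fps_syntax

lemma R_ring_eq_UNIV_iff:
  assumes "n > 0"
  shows "R_ring K1 n = UNIV \<longleftrightarrow> K1 = UNIV \<and> n = 1"
proof
  assume R: "R_ring K1 n = UNIV"
  have "c \<in> K1" for c
  proof -
    have "fps_const c \<in> R_ring K1 n" using R by simp
    then show ?thesis by (simp add: R_ring_def)
  qed
  moreover have "\<not> n \<ge> 2"
  proof
    assume "n \<ge> 2"
    then have "fps_X \<notin> R_ring K1 n"
      unfolding R_ring_def by (auto intro!: exI[of _ 1])
    with R show False by simp
  qed
  ultimately show "K1 = UNIV \<and> n = 1"
    using \<open>n > 0\<close> by auto
qed (auto simp: R_ring_def)

lemma fps_unit_not_in_R_ring:
  assumes "0 \<in> K1" and "R_ring K1 n \<noteq> UNIV"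
  obtains g where "g $ 0 \<noteq> 0" and "g \<notin> R_ring K1 n"
proof -
  obtain f where f: "f \<notin> R_ring K1 n" using assms(2) by blast
  show ?thesis
  proof (cases "f $ 0 = 0")
    case True
    then have "1 + f \<notin> R_ring K1 n" using f assms(1) by (auto simp: R_ring_def)
    then show ?thesis using True by (intro that) simp_all
  qed (use f that in blast)
qed

lemma mult_in_R_ring_if_nth_0_eq_0:
  assumes "p \<in> R_ring K1 n" and "p $ 0 = 0" and "0 \<in> K1"
  shows "p * h \<in> R_ring K1 n"
proof -
  have "(p * h) $ i = 0" if "0 < i" "i < n" for i
  proof -
    have "p $ j = 0" if "j \<le> i" for j
      using assms \<open>i < n\<close> that unfolding R_ring_def by (cases "j = 0") auto
    then show ?thesis by (simp add: fps_mult_nth)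
  qed
  then show ?thesis using assms unfolding R_ring_def by auto
qed

lemma unit_in_nth_0_neq_0:
  assumes "unit_in S f"
  shows "f $ 0 \<noteq> 0"
proof
  assume "f $ 0 = 0"
  obtain v where "f * v = 1" using assms unfolding unit_in_def by auto
  then have "f $ 0 * v $ 0 = 1" by (metis fps_mult_nth_0 fps_one_nth)
  with \<open>f $ 0 = 0\<close> show False by simp
qed

text \<open>The inverse \<open>v\<close> of \<open>f\<close> in \<open>K\<^sub>2[[X]]\<close> lies in \<open>R\<close>: for \<open>0 < i < n\<close>, the coefficient
  \<open>(f v)\<^sub>i = f\<^sub>0 v\<^sub>i = 0\<close> since \<open>f\<^sub>j = 0\<close> for \<open>0 < j \<le> i\<close>.\<close>

lemma unit_in_R_ring_iff:
  assumes K: "is_subfield K1"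
  shows "unit_in (R_ring K1 n) f \<longleftrightarrow> f \<in> R_ring K1 n \<and> f $ 0 \<noteq> 0"
proof (intro iffI; (elim conjE)?)
  assume "unit_in (R_ring K1 n) f"
  then show "f \<in> R_ring K1 n \<and> f $ 0 \<noteq> 0"
    using unit_in_nth_0_neq_0 unfolding unit_in_def by blast
next
  assume f: "f \<in> R_ring K1 n" and f0: "f $ 0 \<noteq> 0"
  define v where "v = inverse f"
  have fv: "f * v = 1" unfolding v_def using f0 by (rule inverse_mult_eq_1')
  have "v $ 0 = inverse (f $ 0)" unfolding v_def using f0 by simp
  then have v0: "v $ 0 \<in> K1" using K f f0 unfolding is_subfield_def R_ring_def by auto
  have vi: "v $ i = 0" if "0 < i" "i < n" for i
  proof -
    have "f $ j = 0" if "j \<in> {1..i}" for j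
      using f that \<open>i < n\<close> unfolding R_ring_def by auto
    then have "(f * v) $ i = f $ 0 * v $ i"
      by (simp add: fps_mult_nth sum.atLeast_Suc_atMost)
    moreover have "(f * v) $ i = 0" using fv that by simp
    ultimately show ?thesis using f0 by simp
  qed
  have "v \<in> R_ring K1 n" using v0 vi unfolding R_ring_def by auto
  then show "unit_in (R_ring K1 n) f" using f fv unfolding unit_in_def by auto
qed

lemma nth_0_eq_0_if_not_unit_in_R_ring:
  assumes "is_subfield K1" and "f \<in> R_ring K1 n" and "\<not> unit_in (R_ring K1 n) f"
  shows "f $ 0 = 0"
  using assms unit_in_R_ring_iff by blast

lemma irred_in_R_ring_mult_fps_unit:
  assumes K: "is_subfield K1" and r: "irred_in (R_ring K1 n) r" and h0: "h $ 0 \<noteq> 0"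
  shows "irred_in (R_ring K1 n) (r * h)"
proof -
  let ?R = "R_ring K1 n"
  have rR: "r \<in> ?R" and "r \<noteq> 0" and "\<not> unit_in ?R r"
    using r unfolding irred_in_def by auto
  have z: "0 \<in> K1" using K unfolding is_subfield_def by auto
  have r0: "r $ 0 = 0" using nth_0_eq_0_if_not_unit_in_R_ring K rR \<open>\<not> unit_in ?R r\<close> .
  have "unit_in ?R a \<or> unit_in ?R b" if ab: "a \<in> ?R" "b \<in> ?R" "r * h = a * b" for a b
  proof (rule ccontr)
    assume "\<not> (unit_in ?R a \<or> unit_in ?R b)"
    then have a0: "a $ 0 = 0" and "\<not> unit_in ?R b"
      using nth_0_eq_0_if_not_unit_in_R_ring[OF K] ab by auto
    have "r = r * h * inverse h" using h0 by (simp add: mult.assoc inverse_mult_eq_1')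
    also have "\<dots> = (a * inverse h) * b" using ab by (simp add: ac_simps)
    finally have "r = (a * inverse h) * b" .
    moreover have "a * inverse h \<in> ?R" using mult_in_R_ring_if_nth_0_eq_0[OF ab(1) a0 z] .
    moreover have "\<not> unit_in ?R (a * inverse h)"
      using unit_in_nth_0_neq_0[of ?R "a * inverse h"] a0 by auto
    ultimately show False using r ab(2) \<open>\<not> unit_in ?R b\<close> unfolding irred_in_def by blast
  qed
  moreover have "\<not> unit_in ?R (r * h)" using unit_in_nth_0_neq_0 r0 by fastforce
  ultimately show ?thesis
    using mult_in_R_ring_if_nth_0_eq_0[OF rR r0 z] \<open>r \<noteq> 0\<close> h0
    unfolding irred_in_def by auto
qed

lemma not_prime_in_R_ring:
  assumes K: "is_subfield K1" and "R_ring K1 n \<noteq> UNIV"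
  shows "\<not> prime_in (R_ring K1 n) p"
proof
  let ?R = "R_ring K1 n"
  assume p: "prime_in ?R p"
  have z: "0 \<in> K1" using K unfolding is_subfield_def by auto
  obtain g where "g $ 0 \<noteq> 0" and g: "g \<notin> ?R"
    by (rule fps_unit_not_in_R_ring[OF z assms(2)])
  have pR: "p \<in> ?R" and "p \<noteq> 0" and "\<not> unit_in ?R p"
    using p unfolding prime_in_def by auto
  have p0: "p $ 0 = 0" using nth_0_eq_0_if_not_unit_in_R_ring K pR \<open>\<not> unit_in ?R p\<close> .
  note p_mult = mult_in_R_ring_if_nth_0_eq_0[OF pR p0 z]
  have "(p * g) * (p * g) = p * (p * (g * g))" by (simp add: ac_simps)
  then have "dvd_in ?R p ((p * g) * (p * g))"
    unfolding dvd_in_def using p_mult by blast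
  then have "dvd_in ?R p (p * g)" using p p_mult unfolding prime_in_def by blast
  then obtain c where "c \<in> ?R" and "p * g = p * c" unfolding dvd_in_def by blast
  with \<open>p \<noteq> 0\<close> g show False by simp
qed

lemma not_abs_irred_in_R_ring:
  assumes K: "is_subfield K1" and "R_ring K1 n \<noteq> UNIV"
  shows "\<not> abs_irred_in (R_ring K1 n) r"
proof
  let ?R = "R_ring K1 n"
  assume r: "abs_irred_in ?R r"
  then have ri: "irred_in ?R r" unfolding abs_irred_in_def by auto
  have z: "0 \<in> K1" using K unfolding is_subfield_def by auto
  obtain g where g0: "g $ 0 \<noteq> 0" and g: "g \<notin> ?R"
    by (rule fps_unit_not_in_R_ring[OF z assms(2)])
  let ?xs = "[r * g, r * inverse g]"
  have "prod_list ?xs = r ^ 2"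
    using g0 by (simp add: power2_eq_square ac_simps inverse_mult_eq_1')
  moreover have "\<forall>x\<in>set ?xs. irred_in ?R x"
    using irred_in_R_ring_mult_fps_unit[OF K ri] g0 by simp
  ultimately have "\<forall>x\<in>set ?xs. assoc_in ?R r x"
    using r unfolding abs_irred_in_def by blast
  then have "assoc_in ?R r (r * g)" by simp
  then obtain u where u: "unit_in ?R u" and "r * g = u * r" unfolding assoc_in_def by blast
  moreover have "r \<noteq> 0" using ri unfolding irred_in_def by auto
  ultimately have "g = u" by (simp add: mult.commute)
  with u g show False unfolding unit_in_def by auto
qed

lemma R_ring_UNIV_1: "R_ring UNIV 1 = UNIV"
  unfolding R_ring_def by auto

lemma unit_in_fps_iff: "unit_in (UNIV :: 'a::field fps set) f \<longleftrightarrow> f $ 0 \<noteq> 0"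
proof -
  have "is_subfield (UNIV :: 'a set)" unfolding is_subfield_def by auto
  from unit_in_R_ring_iff[OF this, of 1 f] show ?thesis by (metis R_ring_UNIV_1 UNIV_I)
qed

lemma subdegree_eq_1_if_irred_in_fps:
  assumes "irred_in (UNIV :: 'a::field fps set) x"
  shows "subdegree x = 1"
proof -
  have "x \<noteq> 0" and "x $ 0 = 0"
    using assms unit_in_fps_iff unfolding irred_in_def by auto
  then have "subdegree x \<noteq> 0" by (simp add: subdegree_eq_0_iff)
  then have ge: "subdegree x \<ge> 1" by simp
  show ?thesis
  proof (rule ccontr)
    assume "subdegree x \<noteq> 1"
    then have "x $ 1 = 0" using ge by (intro nth_less_subdegree_zero) simp
    then have "\<not> unit_in UNIV (fps_shift 1 x)" by (simp add: unit_in_fps_iff)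
    moreover have "\<not> unit_in UNIV (fps_X :: 'a fps)" by (simp add: unit_in_fps_iff)
    moreover have "x = fps_shift 1 x * fps_X" by (rule fps_shift_times_fps_X[OF ge, symmetric])
    ultimately show False using assms unfolding irred_in_def by blast
  qed
qed

lemma fps_X_abs_irred_in: "abs_irred_in (UNIV :: 'a::field fps set) fps_X"
proof -
  let ?U = "UNIV :: 'a fps set"
  have "unit_in ?U a \<or> unit_in ?U b" if "fps_X = a * b" for a b :: "'a fps"
  proof (rule ccontr)
    assume "\<not> ?thesis"
    then have "a $ 0 = 0" and "b $ 0 = 0" by (simp_all add: unit_in_fps_iff)
    then have "(a * b) $ 1 = 0" by (simp add: fps_mult_nth_1)
    with that show False by simp
  qed
  then have irred_X: "irred_in ?U fps_X"
    unfolding irred_in_def by (simp add: unit_in_fps_iff)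
  have subdegree_prod: "subdegree (prod_list xs) = length xs"
    if "\<forall>x\<in>set xs. irred_in ?U x" for xs :: "'a fps list"
    using that
  proof (induction xs)
    case (Cons a xs)
    then have "subdegree a = 1" and "a \<noteq> 0" and "prod_list xs \<noteq> 0"
      using subdegree_eq_1_if_irred_in_fps unfolding irred_in_def
      by (auto simp: prod_list_zero_iff)
    with Cons show ?case by simp
  qed simp
  have assoc_X: "assoc_in ?U fps_X x" if "irred_in ?U x" for x :: "'a fps"
  proof -
    have sd: "subdegree x = 1" and "x \<noteq> 0"
      using that subdegree_eq_1_if_irred_in_fps unfolding irred_in_def by auto
    then have "fps_shift 1 x $ 0 \<noteq> 0" using nth_subdegree_nonzero[of x] by simp
    moreover have "x = fps_shift 1 x * fps_X"
      using sd by (intro fps_shift_times_fps_X[symmetric]) simp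
    ultimately show ?thesis unfolding assoc_in_def unit_in_fps_iff by blast
  qed
  have "length xs = k \<and> (\<forall>x\<in>set xs. assoc_in ?U fps_X x)"
    if "\<forall>x\<in>set xs. irred_in ?U x" and "prod_list xs = fps_X ^ k" for k and xs :: "'a fps list"
    using that subdegree_prod[OF that(1)] assoc_X by simp
  then show ?thesis unfolding abs_irred_in_def using irred_X by blast
qed

lemma fps_X_dvd_in_if_nth_0_eq_0:
  fixes a :: "'a::field fps"
  assumes "a $ 0 = 0"
  shows "dvd_in UNIV fps_X a"
proof (cases "a = 0")
  case False
  with assms have "subdegree a \<noteq> 0" by (simp add: subdegree_eq_0_iff)
  then have "a = fps_X * fps_shift 1 a"
    by (subst mult.commute, intro fps_shift_times_fps_X[symmetric]) simp
  then show ?thesis unfolding dvd_in_def by blast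
qed (simp add: dvd_in_def)

lemma fps_X_prime_in: "prime_in (UNIV :: 'a::field fps set) fps_X"
proof -
  have "dvd_in UNIV fps_X a \<or> dvd_in UNIV fps_X b"
    if ab: "dvd_in UNIV fps_X (a * b)" for a b :: "'a fps"
  proof -
    obtain c where "a * b = fps_X * c" using ab unfolding dvd_in_def by blast
    then have "(a * b) $ 0 = 0" by simp
    then have "a $ 0 = 0 \<or> b $ 0 = 0" by simp
    then show ?thesis using fps_X_dvd_in_if_nth_0_eq_0 by blast
  qed
  then show ?thesis unfolding prime_in_def using unit_in_fps_iff[of fps_X] by auto
qed

theorem mainTheorem2:
  fixes K1 :: "'a::field set" and n :: nat
  assumes "is_subfield K1" and "n > 0"
  shows "((\<exists>r. abs_irred_in (R_ring K1 n) r) \<longleftrightarrow> (K1 = UNIV \<and> n = 1)) \<and>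
         ((\<exists>p. prime_in (R_ring K1 n) p) \<longleftrightarrow> (K1 = UNIV \<and> n = 1))"
proof (cases "R_ring K1 n = UNIV")
  case True
  then have "abs_irred_in (R_ring K1 n) fps_X" and "prime_in (R_ring K1 n) fps_X"
    using fps_X_abs_irred_in fps_X_prime_in by simp_all
  moreover have "K1 = UNIV \<and> n = 1" using True R_ring_eq_UNIV_iff[OF assms(2)] by blast
  ultimately show ?thesis by blast
next
  case False
  then have "\<not> (K1 = UNIV \<and> n = 1)" using R_ring_eq_UNIV_iff[OF assms(2)] by blast
  with False show ?thesis
    using not_abs_irred_in_R_ring[OF assms(1)] not_prime_in_R_ring[OF assms(1)] by blast
qed

end
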